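(* Let $G$ be a finite graph, let $H$ be a connected graph, and let $f$ be a covering projection from $G$ to $H$. Let $S\subseteq V_G$ be a cutset of $G$ and let $A$ be (the vertex set of) a connected component of $G\setminus S$. Then for any two vertices $u,v\in V_H$ it holds that $|f^{-1}(u)\cap A|-|f^{-1}(v)\cap A|\le |S|$.
   Context: A graph is a triple $(V,\Lambda,\iota)$ where $V$ is a set of vertices, $\Lambda=E\cup L\cup S$ is a set of links partitioned into edges, loops and semi-edges, and $\iota$ assigns to each edge a 2-element subset of $V$ and to each loop or semi-edge a single vertex. A covering projection from $G$ to $H$ is a map $f:V_G\cup\Lambda_G\to V_H\cup\Lambda_H$ sending vertices to vertices and links to links such that: for every edge $e$ of $H$ with end-vertices $u,v$, $f^{-1}(e)$ is a perfect matching between $f^{-1}(u)$ and $f^{-1}(v)$; for every loop $l$ of $H$ at $u$, $f^{-1}(l)$ is a disjoint union of cycles (including 2-cycles formed by parallel edges, and loops) spanning $f^{-1}(u)$; for every semi-edge $s$ of $H$ at $u$, $f^{-1}(s)$ is a disjoint union of edges and semi-edges spanning $f^{-1}(u)$. A cutset of $G$ is a set of vertices whose removal disconnects $G$. *)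

theory Defs
  imports Main
begin

record ('v, 'l) mgraph =
  verts :: "'v set"
  edges :: "'l set"
  loops :: "'l set"
  semis :: "'l set"
  inc   :: "'l \<Rightarrow> 'v set"

definition links :: "('v, 'l) mgraph \<Rightarrow> 'l set" where
  "links G = edges G \<union> loops G \<union> semis G"

definition is_graph :: "('v, 'l) mgraph \<Rightarrow> bool" where
  "is_graph G \<longleftrightarrow>
     edges G \<inter> loops G = {} \<and> edges G \<inter> semis G = {} \<and> loops G \<inter> semis G = {} \<and>
     (\<forall>e\<in>edges G. inc G e \<subseteq> verts G \<and> card (inc G e) = 2) \<and>
     (\<forall>l\<in>loops G \<union> semis G. \<exists>x\<in>verts G. inc G l = {x})"

definition finite_graph :: "('v, 'l) mgraph \<Rightarrow> bool" where
  "finite_graph G \<longleftrightarrow> is_graph G \<and> finite (verts G) \<and> finite (links G)"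

definition ldeg :: "('v, 'l) mgraph \<Rightarrow> 'l set \<Rightarrow> 'v \<Rightarrow> nat" where
  "ldeg G F x = card {e \<in> F \<inter> edges G. x \<in> inc G e}
              + 2 * card {l \<in> F \<inter> loops G. inc G l = {x}}
              + card {s \<in> F \<inter> semis G. inc G s = {x}}"

definition covering :: "('v, 'l) mgraph \<Rightarrow> ('w, 'm) mgraph \<Rightarrow> ('v \<Rightarrow> 'w) \<Rightarrow> ('l \<Rightarrow> 'm) \<Rightarrow> bool" where
  "covering G H fv fl \<longleftrightarrow>
     fv ` verts G \<subseteq> verts H \<and> fl ` links G \<subseteq> links H \<and>
     (let fib = (\<lambda>u. {x \<in> verts G. fv x = u});
          pre = (\<lambda>a. {e \<in> links G. fl e = a}) in
       \<comment> \<open>edges: preimage is a perfect matching between the two fibres\<close>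
       (\<forall>a\<in>edges H. \<forall>u v. inc H a = {u, v} \<longrightarrow>
          pre a \<subseteq> edges G \<and>
          (\<forall>e\<in>pre a. inc G e \<inter> fib u \<noteq> {} \<and> inc G e \<inter> fib v \<noteq> {}
                     \<and> inc G e \<subseteq> fib u \<union> fib v) \<and>
          (\<forall>x\<in>fib u \<union> fib v. ldeg G (pre a) x = 1)) \<and>
       \<comment> \<open>loops: preimage is a disjoint union of cycles (2-regular, loops counting twice)
           spanning the fibre\<close>
       (\<forall>a\<in>loops H. \<forall>u. inc H a = {u} \<longrightarrow>
          pre a \<subseteq> edges G \<union> loops G \<and>
          (\<forall>e\<in>pre a. inc G e \<subseteq> fib u) \<and>
          (\<forall>x\<in>fib u. ldeg G (pre a) x = 2)) \<and>
       \<comment> \<open>semi-edges: preimage is a disjoint union of edges and semi-edges spanning the fibre\<close>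
       (\<forall>a\<in>semis H. \<forall>u. inc H a = {u} \<longrightarrow>
          pre a \<subseteq> edges G \<union> semis G \<and>
          (\<forall>e\<in>pre a. inc G e \<subseteq> fib u) \<and>
          (\<forall>x\<in>fib u. ldeg G (pre a) x = 1)))"

definition adj_in :: "('v, 'l) mgraph \<Rightarrow> 'v set \<Rightarrow> 'v \<Rightarrow> 'v \<Rightarrow> bool" where
  "adj_in G W x y \<longleftrightarrow> x \<in> W \<and> y \<in> W \<and> (\<exists>e\<in>edges G. inc G e = {x, y})"

definition reach_in :: "('v, 'l) mgraph \<Rightarrow> 'v set \<Rightarrow> 'v \<Rightarrow> 'v \<Rightarrow> bool" where
  "reach_in G W x y \<longleftrightarrow> x \<in> W \<and> (adj_in G W)\<^sup>*\<^sup>* x y"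

definition connected_graph :: "('v, 'l) mgraph \<Rightarrow> bool" where
  "connected_graph G \<longleftrightarrow> verts G \<noteq> {} \<and>
     (\<forall>x\<in>verts G. \<forall>y\<in>verts G. reach_in G (verts G) x y)"

definition cutset :: "('v, 'l) mgraph \<Rightarrow> 'v set \<Rightarrow> bool" where
  "cutset G S \<longleftrightarrow> S \<subseteq> verts G \<and>
     (\<exists>x\<in>verts G - S. \<exists>y\<in>verts G - S. \<not> reach_in G (verts G - S) x y)"

definition component_of_removal :: "('v, 'l) mgraph \<Rightarrow> 'v set \<Rightarrow> 'v set \<Rightarrow> bool" where
  "component_of_removal G S A \<longleftrightarrow>
     (\<exists>x\<in>verts G - S. A = {y. reach_in G (verts G - S) x y})"

end

theory Submission
  imports Defs "HOL-Library.Transitive_Closure_Table"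
begin

text \<open>Over an edge u u' of H the covering restricts to a perfect matching between the fibres of u
  and u'. Since a component A of G - S is closed under neighbours outside S, the matching maps the
  part of the fibre of u inside A injectively into the part of the fibre of u' inside A \<union> S.
  Telescoping this along a simple path from u to v in H bounds the difference by the number of
  vertices of S lying in the (pairwise disjoint) fibres of the inner path vertices, hence by |S|.\<close>

abbreviation fibre :: "('v, 'l) mgraph \<Rightarrow> ('v \<Rightarrow> 'w) \<Rightarrow> 'w \<Rightarrow> 'v set" where
  "fibre G fv u \<equiv> {x \<in> verts G. fv x = u}"

abbreviation lifts :: "('v, 'l) mgraph \<Rightarrow> ('l \<Rightarrow> 'm) \<Rightarrow> 'm \<Rightarrow> 'l set" where
  "lifts G fl a \<equiv> {e \<in> links G. fl e = a}"

lemma edge_ends_distinct: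
  assumes "is_graph H" "a \<in> edges H" "inc H a = {u, u'}"
  shows "u \<noteq> u'"
  using assms unfolding is_graph_def by fastforce

lemma covering_edgeD:
  assumes "covering G H fv fl" "a \<in> edges H" "inc H a = {u, u'}"
  shows "lifts G fl a \<subseteq> edges G"
    and "\<And>e. e \<in> lifts G fl a \<Longrightarrow> inc G e \<inter> fibre G fv u' \<noteq> {}"
    and "\<And>x. x \<in> fibre G fv u \<union> fibre G fv u' \<Longrightarrow> ldeg G (lifts G fl a) x = 1"
proof -
  have "\<forall>a\<in>edges H. \<forall>u u'. inc H a = {u, u'} \<longrightarrow> lifts G fl a \<subseteq> edges G \<and>
      (\<forall>e\<in>lifts G fl a. inc G e \<inter> fibre G fv u \<noteq> {} \<and> inc G e \<inter> fibre G fv u' \<noteq> {}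
         \<and> inc G e \<subseteq> fibre G fv u \<union> fibre G fv u') \<and>
      (\<forall>x\<in>fibre G fv u \<union> fibre G fv u'. ldeg G (lifts G fl a) x = 1)"
    using assms(1) unfolding covering_def Let_def by (elim conjE)
  with assms(2,3) show "lifts G fl a \<subseteq> edges G"
    and "\<And>e. e \<in> lifts G fl a \<Longrightarrow> inc G e \<inter> fibre G fv u' \<noteq> {}"
    and "\<And>x. x \<in> fibre G fv u \<union> fibre G fv u' \<Longrightarrow> ldeg G (lifts G fl a) x = 1"
    by blast+
qed

lemma covering_edge_lift_unique:
  assumes "covering G H fv fl" "is_graph G" "a \<in> edges H" "inc H a = {u, u'}"
    and "x \<in> fibre G fv u \<union> fibre G fv u'"
  shows "\<exists>!e. e \<in> lifts G fl a \<and> x \<in> inc G e"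
proof -
  have sub: "lifts G fl a \<subseteq> edges G"
    using covering_edgeD(1)[OF assms(1,3,4)] .
  with \<open>is_graph G\<close> have "lifts G fl a \<inter> loops G = {}" "lifts G fl a \<inter> semis G = {}"
    unfolding is_graph_def by blast+
  moreover have "ldeg G (lifts G fl a) x = 1"
    using covering_edgeD(3)[OF assms(1,3,4,5)] .
  ultimately have "card {e \<in> lifts G fl a. x \<in> inc G e} = 1"
    using sub unfolding ldeg_def by (simp add: Int_absorb2)
  then obtain e0 where "{e \<in> lifts G fl a. x \<in> inc G e} = {e0}"
    by (rule card_1_singletonE)
  then show ?thesis
    by (auto simp: set_eq_iff)
qed

lemma covering_edge_lift:
  assumes "covering G H fv fl" "is_graph G" "is_graph H" "a \<in> edges H" "inc H a = {u, u'}"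
    and "x \<in> fibre G fv u"
  obtains y e where "y \<in> fibre G fv u'" "e \<in> lifts G fl a" "inc G e = {x, y}"
proof -
  obtain e where e: "e \<in> lifts G fl a" "x \<in> inc G e"
    using covering_edge_lift_unique[OF assms(1,2,4,5)] \<open>x \<in> fibre G fv u\<close> by blast
  then obtain y where y: "y \<in> inc G e" "y \<in> fibre G fv u'"
    using covering_edgeD(2)[OF assms(1,4,5)] by blast
  have "x \<noteq> y"
    using edge_ends_distinct[OF assms(3-5)] \<open>x \<in> fibre G fv u\<close> y(2) by blast
  have "card (inc G e) = 2"
    using \<open>is_graph G\<close> e(1) covering_edgeD(1)[OF assms(1,4,5)] unfolding is_graph_def by blast
  then have "inc G e = {x, y}"
    using e(2) y(1) \<open>x \<noteq> y\<close> by (auto simp: card_2_iff)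
  with y(2) e(1) show thesis
    using that by blast
qed

lemma card_fibre_inter_closed_le:
  assumes "covering G H fv fl" "is_graph G" "is_graph H" "finite (verts G)"
    and "a \<in> edges H" "inc H a = {u, u'}"
    and closed: "\<And>x y e. x \<in> A \<Longrightarrow> y \<in> verts G - S \<Longrightarrow> e \<in> edges G \<Longrightarrow> inc G e = {x, y} \<Longrightarrow> y \<in> A"
  shows "card (fibre G fv u \<inter> A) \<le> card (fibre G fv u' \<inter> A) + card (fibre G fv u' \<inter> S)"
proof -
  define matched where "matched x y \<longleftrightarrow> (\<exists>e\<in>lifts G fl a. inc G e = {x, y})" for x y
  have "card (fibre G fv u \<inter> A) \<le> card (fibre G fv u' \<inter> A \<union> fibre G fv u' \<inter> S)"
  proof (rule card_le_if_inj_on_rel[where r = matched])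
    show "finite (fibre G fv u' \<inter> A \<union> fibre G fv u' \<inter> S)"
      using \<open>finite (verts G)\<close> by auto
  next
    fix x assume x: "x \<in> fibre G fv u \<inter> A"
    then obtain y e where y: "y \<in> fibre G fv u'" "e \<in> lifts G fl a" "inc G e = {x, y}"
      using covering_edge_lift[OF assms(1-3,5,6)] by blast
    moreover have "y \<in> A \<or> y \<in> S"
      using closed[of x y e] x y covering_edgeD(1)[OF assms(1,5,6)] by blast
    ultimately show "\<exists>y. y \<in> fibre G fv u' \<inter> A \<union> fibre G fv u' \<inter> S \<and> matched x y"
      unfolding matched_def by blast
  next
    fix x1 x2 y
    assume x: "x1 \<in> fibre G fv u \<inter> A" "x2 \<in> fibre G fv u \<inter> A"
      and y: "y \<in> fibre G fv u' \<inter> A \<union> fibre G fv u' \<inter> S" and "matched x1 y" "matched x2 y"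
    then obtain e1 e2 where e: "e1 \<in> lifts G fl a" "inc G e1 = {x1, y}"
      "e2 \<in> lifts G fl a" "inc G e2 = {x2, y}"
      unfolding matched_def by blast
    have "e1 = e2"
      using covering_edge_lift_unique[OF assms(1,2,5,6), of y] y e by blast
    moreover have "x1 \<noteq> y" "x2 \<noteq> y"
      using edge_ends_distinct[OF assms(3,5,6)] x y by blast+
    ultimately show "x1 = x2"
      using e by (metis doubleton_eq_iff)
  qed
  also have "\<dots> \<le> card (fibre G fv u' \<inter> A) + card (fibre G fv u' \<inter> S)"
    by (rule card_Un_le)
  finally show ?thesis .
qed

lemma component_of_removal_subset:
  assumes "component_of_removal G S A"
  shows "A \<subseteq> verts G - S"
proof
  fix y assume "y \<in> A"
  with assms obtain x where "(adj_in G (verts G - S))\<^sup>*\<^sup>* x y" "x \<in> verts G - S"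
    unfolding component_of_removal_def reach_in_def by blast
  then show "y \<in> verts G - S"
    by (induction rule: rtranclp_induct) (auto simp: adj_in_def)
qed

lemma component_of_removal_closed:
  assumes "component_of_removal G S A" "x \<in> A" "y \<in> verts G - S" "e \<in> edges G" "inc G e = {x, y}"
  shows "y \<in> A"
proof -
  obtain x0 where A: "x0 \<in> verts G - S" "A = {y. reach_in G (verts G - S) x0 y}"
    using assms(1) unfolding component_of_removal_def by blast
  have "adj_in G (verts G - S) x y"
    using component_of_removal_subset[OF assms(1)] assms(2-5) unfolding adj_in_def by blast
  with A \<open>x \<in> A\<close> show ?thesis
    unfolding reach_in_def by (auto intro: rtranclp.rtrancl_into_rtrancl)
qed

lemma rtrancl_path_telescope:
  fixes f g :: "'a \<Rightarrow> nat"
  assumes "rtrancl_path R p xs q" "distinct xs" "\<And>a b. R a b \<Longrightarrow> f a \<le> f b + g b"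
  shows "f p \<le> f q + sum g (set xs)"
  using assms
proof (induction rule: rtrancl_path.induct)
  case (base x)
  then show ?case by simp
next
  case (step x y ys z)
  then have "f x \<le> f y + g y" "f y \<le> f z + sum g (set ys)" "y \<notin> set ys"
    by simp_all
  then show ?case by simp
qed

lemma sum_card_fibres_inter_le:
  assumes "finite S"
  shows "(\<Sum>w\<in>W. card ({x \<in> V. f x = w} \<inter> S)) \<le> card S"
proof (cases "finite W")
  case True
  then have "(\<Sum>w\<in>W. card ({x \<in> V. f x = w} \<inter> S)) = card (\<Union>w\<in>W. {x \<in> V. f x = w} \<inter> S)"
    using \<open>finite S\<close> by (subst card_UN_disjoint) auto
  also have "\<dots> \<le> card S"
    using \<open>finite S\<close> by (intro card_mono) auto
  finally show ?thesis .
qed simp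

theorem mainTheorem2:
  fixes G :: "('v, 'l) mgraph" and H :: "('w, 'm) mgraph"
    and fv :: "'v \<Rightarrow> 'w" and fl :: "'l \<Rightarrow> 'm"
  assumes "finite_graph G"
    and "is_graph H"
    and "connected_graph H"
    and "covering G H fv fl"
    and "cutset G S"
    and "component_of_removal G S A"
    and "u \<in> verts H" and "v \<in> verts H"
  shows "int (card ({x \<in> verts G. fv x = u} \<inter> A)) - int (card ({x \<in> verts G. fv x = v} \<inter> A))
         \<le> int (card S)"
proof -
  have G: "is_graph G" "finite (verts G)"
    using assms(1) unfolding finite_graph_def by auto
  have "finite S"
    using assms(5) G(2) unfolding cutset_def by (meson finite_subset)
  define inA where "inA w = card (fibre G fv w \<inter> A)" for w
  define inS where "inS w = card (fibre G fv w \<inter> S)" for w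
  have step: "inA w \<le> inA w' + inS w'" if "adj_in H (verts H) w w'" for w w'
    using that unfolding adj_in_def inA_def inS_def
    by (auto intro: card_fibre_inter_closed_le[OF assms(4) G(1) assms(2) G(2)]
        component_of_removal_closed[OF assms(6)])
  have "(adj_in H (verts H))\<^sup>*\<^sup>* u v"
    using assms(3,7,8) unfolding connected_graph_def reach_in_def by blast
  then obtain ws where path: "rtrancl_path (adj_in H (verts H)) u ws v" "distinct (u # ws)"
    by (metis rtrancl_path_distinct rtranclp_eq_rtrancl_path)
  have "inA u \<le> inA v + sum inS (set ws)"
    using rtrancl_path_telescope[OF path(1) _ step] path(2) by simp
  moreover have "sum inS (set ws) \<le> card S"
    unfolding inS_def using sum_card_fibres_inter_le[OF \<open>finite S\<close>] .
  ultimately show ?thesis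
    unfolding inA_def by simp
qed

end
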